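(* For any prime number $p$ and any integer $n\ge 1$, $F(p,n)=p^{n-1}(p^n+p-1)$.
   Context: For a prime $p$ and $n\ge 1$, $r(p,n)$ denotes the number of orbits of the left action of $\mathrm{SL}(2,\mathbb{Z})$ on $(\mathbb{Z}_p\times\mathbb{Z}_p)^n$, where elements of $(\mathbb{Z}_p\times\mathbb{Z}_p)^n$ are viewed as $2\times n$ matrices over $\mathbb{Z}_p$ and a matrix in $\mathrm{SL}(2,\mathbb{Z})$ acts by left matrix multiplication with entries reduced modulo $p$. Define $F(p,n):=r(p,n+1)-r(p,n)$ for $n\ge 1$. *)

theory Defs
  imports Main "HOL-Computational_Algebra.Primes"
begin

text \<open>SL(2,Z): integer 2x2 matrices (a b; c d), encoded as (a,b,c,d), with determinant 1.\<close>
definition SL2Z :: "(int \<times> int \<times> int \<times> int) set" where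
  "SL2Z = {(a, b, c, d). a * d - b * c = 1}"

text \<open>A 2 x n matrix over Z_p is a list of n columns (x,y) with entries in {0..p-1}.\<close>
definition configs :: "nat \<Rightarrow> nat \<Rightarrow> (int \<times> int) list set" where
  "configs p n = {xs. length xs = n \<and>
     (\<forall>(x, y) \<in> set xs. 0 \<le> x \<and> x < int p \<and> 0 \<le> y \<and> y < int p)}"

definition act :: "nat \<Rightarrow> int \<times> int \<times> int \<times> int \<Rightarrow> (int \<times> int) list \<Rightarrow> (int \<times> int) list" where
  "act p g xs = (case g of (a, b, c, d) \<Rightarrow>
     map (\<lambda>(x, y). ((a * x + b * y) mod int p, (c * x + d * y) mod int p)) xs)"

definition orbit :: "nat \<Rightarrow> (int \<times> int) list \<Rightarrow> (int \<times> int) list set" where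
  "orbit p xs = {act p g xs | g. g \<in> SL2Z}"

definition r :: "nat \<Rightarrow> nat \<Rightarrow> nat" where
  "r p n = card {orbit p xs | xs. xs \<in> configs p n}"

definition F :: "nat \<Rightarrow> nat \<Rightarrow> int" where
  "F p n = int (r p (n + 1)) - int (r p n)"

end

theory Submission
  imports Defs "HOL-Number_Theory.Cong"
begin

(*
  SL(2,Z) acts on 2 x n matrices over Z_p through SL(2,Z_p), onto which it surjects, so the
  orbits can be sorted by the rank of the matrix mod p.  The zero matrix is its own orbit.  A
  rank-one matrix is determined within its orbit by any fixed nonzero column, and SL(2,Z_p) is
  transitive on nonzero vectors, so its orbit has p^2 - 1 elements.  On rank-two matrices the
  action is free, so their orbits have |SL(2,Z_p)| = p^3 - p elements.  Appending a column to a
  matrix of rank at most one keeps the rank at most one for p^2 columns if the matrix is zero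
  and for p columns otherwise; hence the number N_n of such matrices is p^(n+1) + p^n - p, and
  r(p,n) (p^3 - p) = (p^3 - p) + p (N_n - 1) + (p^(2n) - N_n).
*)

lemma card_partition_uniform:
  assumes "finite T"
    and "\<And>x. x \<in> T \<Longrightarrow> x \<in> C x" and "\<And>x. x \<in> T \<Longrightarrow> C x \<subseteq> T"
    and "\<And>x y. x \<in> T \<Longrightarrow> y \<in> T \<Longrightarrow> C x \<inter> C y \<noteq> {} \<Longrightarrow> C x = C y"
    and "\<And>x. x \<in> T \<Longrightarrow> card (C x) = k"
  shows "k * card (C ` T) = card T"
proof -
  have cover: "\<Union>(C ` T) = T"
    using assms(2,3) by blast
  have "k * card (C ` T) = card (\<Union>(C ` T))"
  proof (rule card_partition)
    show "c1 \<inter> c2 = {}" if "c1 \<in> C ` T" "c2 \<in> C ` T" "c1 \<noteq> c2" for c1 c2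
      using that assms(4) by blast
  qed (use assms cover in auto)
  with cover show ?thesis by simp
qed

lemma card_image_split_invariant:
  assumes "finite S" "T \<subseteq> S"
    and "\<And>x. x \<in> S \<Longrightarrow> x \<in> C x" and "\<And>x. x \<in> T \<Longrightarrow> C x \<subseteq> T"
  shows "card (C ` S) = card (C ` T) + card (C ` (S - T))"
proof -
  have "C ` S = C ` T \<union> C ` (S - T)"
    using assms(2) by blast
  moreover have "C ` T \<inter> C ` (S - T) = {}"
    using assms(3,4) by fastforce
  ultimately show ?thesis
    using assms(1,2) by (simp add: card_Un_disjoint finite_subset)
qed

definition mat_mult :: "int \<times> int \<times> int \<times> int \<Rightarrow> int \<times> int \<times> int \<times> int \<Rightarrow> int \<times> int \<times> int \<times> int"
  where "mat_mult g h = (case g of (a, b, c, d) \<Rightarrow> case h of (a', b', c', d') \<Rightarrow>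
     (a * a' + b * c', a * b' + b * d', c * a' + d * c', c * b' + d * d'))"

definition mat_det :: "int \<times> int \<times> int \<times> int \<Rightarrow> int"
  where "mat_det g = (case g of (a, b, c, d) \<Rightarrow> a * d - b * c)"

definition mat_adj :: "int \<times> int \<times> int \<times> int \<Rightarrow> int \<times> int \<times> int \<times> int"
  where "mat_adj g = (case g of (a, b, c, d) \<Rightarrow> (d, -b, -c, a))"

definition mat_mod :: "nat \<Rightarrow> int \<times> int \<times> int \<times> int \<Rightarrow> int \<times> int \<times> int \<times> int"
  where "mat_mod p g = (case g of (a, b, c, d) \<Rightarrow> (a mod int p, b mod int p, c mod int p, d mod int p))"

definition act_vec :: "nat \<Rightarrow> int \<times> int \<times> int \<times> int \<Rightarrow> int \<times> int \<Rightarrow> int \<times> int"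
  where "act_vec p g v = (case g of (a, b, c, d) \<Rightarrow> case v of (x, y) \<Rightarrow>
     ((a * x + b * y) mod int p, (c * x + d * y) mod int p))"

definition det2 :: "int \<times> int \<Rightarrow> int \<times> int \<Rightarrow> int"
  where "det2 u w = fst u * snd w - snd u * fst w"

lemma lincomb_mod_right: "(a * (u mod m) + b * (w mod m)) mod m = (a * u + b * w) mod (m::int)"
  by (metis mod_add_eq mod_mult_right_eq)

lemma lindiff_mod_right: "(a * (u mod m) - b * (w mod m)) mod m = (a * u - b * w) mod (m::int)"
  by (metis mod_diff_eq mod_mult_right_eq)

lemma lincomb_mod_left: "((a mod m) * u + (b mod m) * w) mod m = (a * u + b * w) mod (m::int)"
  by (metis mod_add_eq mod_mult_left_eq)

lemma det_mod: "((a mod m) * (d mod m) - (b mod m) * (c mod m)) mod m = (a * d - b * c) mod (m::int)"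
  by (metis mod_diff_eq mod_mult_eq)

lemma act_eq_map: "act p g xs = map (act_vec p g) xs"
  by (cases g) (auto simp: act_def act_vec_def)

lemma SL2Z_iff_det: "g \<in> SL2Z \<longleftrightarrow> mat_det g = 1"
  by (cases g) (simp add: SL2Z_def mat_det_def)

lemma mat_det_mult: "mat_det (mat_mult g h) = mat_det g * mat_det h"
  by (cases g, cases h) (simp add: mat_det_def mat_mult_def algebra_simps)

lemma mat_det_adj: "mat_det (mat_adj g) = mat_det g"
  by (cases g) (simp add: mat_det_def mat_adj_def algebra_simps)

lemma mat_mult_adj_left: "mat_mult (mat_adj g) g = (mat_det g, 0, 0, mat_det g)"
  by (cases g) (simp add: mat_det_def mat_mult_def mat_adj_def algebra_simps)

lemma act_vec_mat_mult: "act_vec p (mat_mult g h) v = act_vec p g (act_vec p h v)"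
  by (cases g, cases h, cases v) (simp add: act_vec_def mat_mult_def lincomb_mod_right algebra_simps)

lemma act_mat_mult: "act p (mat_mult g h) xs = act p g (act p h xs)"
  by (simp add: act_eq_map act_vec_mat_mult)

lemma act_vec_mat_mod: "act_vec p (mat_mod p g) v = act_vec p g v"
  by (cases g, cases v) (simp add: act_vec_def mat_mod_def lincomb_mod_left)

lemma act_mat_mod: "act p (mat_mod p g) xs = act p g xs"
  by (simp add: act_eq_map act_vec_mat_mod)

lemma act_vec_zero: "act_vec p g (0, 0) = (0, 0)"
  by (cases g) (simp add: act_vec_def)

lemma det2_act_vec:
  "det2 (act_vec p g u) (act_vec p g w) mod int p = (mat_det g * det2 u w) mod int p"
proof -
  obtain a b c d where g: "g = (a, b, c, d)" by (cases g) auto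
  obtain x y x' y' where uw: "u = (x, y)" "w = (x', y')" by (cases u, cases w) auto
  have "det2 (act_vec p g u) (act_vec p g w) mod int p =
     ((a*x + b*y) * (c*x' + d*y') - (c*x + d*y) * (a*x' + b*y')) mod int p"
    by (simp add: g uw act_vec_def det2_def det_mod)
  also have "\<dots> = (mat_det g * det2 u w) mod int p"
    by (simp add: g uw mat_det_def det2_def algebra_simps)
  finally show ?thesis .
qed

lemma act_vec_multiple:
  assumes "int p dvd (u1 - s * v1)" "int p dvd (u2 - s * v2)"
  shows "act_vec p g (u1, u2) = ((s * fst (act_vec p g (v1, v2))) mod int p, (s * snd (act_vec p g (v1, v2))) mod int p)"
proof -
  obtain a b c d where g: "g = (a, b, c, d)" by (cases g) auto
  have "a*u1 + b*u2 - s*(a*v1 + b*v2) = a*(u1 - s*v1) + b*(u2 - s*v2)"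
       "c*u1 + d*u2 - s*(c*v1 + d*v2) = c*(u1 - s*v1) + d*(u2 - s*v2)"
    by (simp_all add: algebra_simps)
  then have "(a*u1 + b*u2) mod int p = (s*(a*v1 + b*v2)) mod int p"
            "(c*u1 + d*u2) mod int p = (s*(c*v1 + d*v2)) mod int p"
    using assms by (simp_all only: mod_eq_dvd_iff) simp_all
  then show ?thesis by (simp add: g act_vec_def mod_mult_right_eq)
qed

definition vecs :: "nat \<Rightarrow> (int \<times> int) set"
  where "vecs p = {0..<int p} \<times> {0..<int p}"

lemma configs_eq: "configs p n = {xs. set xs \<subseteq> vecs p \<and> length xs = n}"
  by (auto simp: configs_def vecs_def)

lemma finite_vecs: "finite (vecs p)"
  by (simp add: vecs_def)

lemma card_vecs: "card (vecs p) = p\<^sup>2"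
  by (simp add: vecs_def card_cartesian_product power2_eq_square)

lemma finite_configs: "finite (configs p n)"
  unfolding configs_eq using finite_vecs by (rule finite_lists_length_eq)

lemma card_configs: "card (configs p n) = p ^ (2 * n)"
  unfolding configs_eq by (simp add: card_lists_length_eq finite_vecs card_vecs power_mult)

lemma residue_eq: "x \<in> {0..<int p} \<Longrightarrow> y \<in> {0..<int p} \<Longrightarrow> int p dvd (x - y) \<Longrightarrow> x = y"
  by (metis atLeastLessThan_iff mod_eq_dvd_iff mod_pos_pos_trivial)

lemma nonzero_vec_coord:
  assumes "(v1, v2) \<in> vecs p" "(v1, v2) \<noteq> (0, 0)"
  shows "\<not> int p dvd v1 \<or> \<not> int p dvd v2"
  using assms residue_eq[of _ p 0] by (auto simp: vecs_def)

lemma nonzero_column: "xs \<noteq> replicate (length xs) (0, 0) \<Longrightarrow> \<exists>v\<in>set xs. v \<noteq> (0, 0)"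
  by (metis replicate_length_same)

lemma act_vec_id: "v \<in> vecs p \<Longrightarrow> act_vec p (1, 0, 0, 1) v = v"
  by (cases v) (simp add: act_vec_def vecs_def)

lemma act_id: "xs \<in> configs p n \<Longrightarrow> act p (1, 0, 0, 1) xs = xs"
  by (auto simp: act_eq_map configs_eq act_vec_id intro!: map_idI)

lemma act_vec_in_vecs: "p > 0 \<Longrightarrow> act_vec p g v \<in> vecs p"
  by (cases g, cases v) (simp add: act_vec_def vecs_def)

lemma act_in_configs: "p > 0 \<Longrightarrow> xs \<in> configs p n \<Longrightarrow> act p g xs \<in> configs p n"
  by (auto simp: act_eq_map configs_eq act_vec_in_vecs)

lemma orbit_iff: "ys \<in> orbit p xs \<longleftrightarrow> (\<exists>g\<in>SL2Z. ys = act p g xs)"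
  by (auto simp: orbit_def)

lemma orbit_subset_configs: "p > 0 \<Longrightarrow> xs \<in> configs p n \<Longrightarrow> orbit p xs \<subseteq> configs p n"
  by (auto simp: orbit_iff act_in_configs)

lemma self_in_orbit: "xs \<in> configs p n \<Longrightarrow> xs \<in> orbit p xs"
  unfolding orbit_iff by (rule bexI[of _ "(1, 0, 0, 1)"]) (auto simp: act_id SL2Z_iff_det mat_det_def)

lemma orbit_trans: "ys \<in> orbit p xs \<Longrightarrow> zs \<in> orbit p ys \<Longrightarrow> zs \<in> orbit p xs"
  unfolding orbit_iff by (metis SL2Z_iff_det act_mat_mult mat_det_mult mult_1_left)

lemma orbit_sym:
  assumes "xs \<in> configs p n" "ys \<in> orbit p xs"
  shows "xs \<in> orbit p ys"
proof -
  obtain g where g: "g \<in> SL2Z" "ys = act p g xs"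
    using assms(2) by (auto simp: orbit_iff)
  have "act p (mat_adj g) ys = act p (mat_mult (mat_adj g) g) xs"
    using g by (simp add: act_mat_mult)
  also have "\<dots> = xs"
    using g assms(1) by (simp add: mat_mult_adj_left SL2Z_iff_det act_id)
  finally show ?thesis
    using g by (auto simp: orbit_iff SL2Z_iff_det mat_det_adj intro!: bexI[of _ "mat_adj g"])
qed

lemma orbit_eq: "xs \<in> configs p n \<Longrightarrow> ys \<in> orbit p xs \<Longrightarrow> orbit p ys = orbit p xs"
  by (blast intro: orbit_trans orbit_sym)

lemma orbits_disjoint:
  "xs \<in> configs p n \<Longrightarrow> ys \<in> configs p n \<Longrightarrow> orbit p xs \<inter> orbit p ys \<noteq> {} \<Longrightarrow> orbit p xs = orbit p ys"
  by (metis disjoint_iff orbit_eq)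

lemma orbit_zero: "orbit p (replicate n (0, 0)) = {replicate n (0, 0)}"
proof -
  have "act p g (replicate n (0, 0)) = replicate n (0, 0)" for g
    by (simp add: act_eq_map act_vec_zero)
  moreover have "(1, 0, 0, 1) \<in> SL2Z"
    by (simp add: SL2Z_iff_det mat_det_def)
  ultimately show ?thesis
    by (auto simp: orbit_iff intro!: bexI[of _ "(1, 0, 0, 1)"])
qed

lemma zero_notin_orbit:
  assumes "xs \<in> configs p n" "xs \<noteq> replicate n (0, 0)"
  shows "replicate n (0, 0) \<notin> orbit p xs"
  using orbit_sym[OF assms(1), of "replicate n (0, 0)"] assms(2) by (auto simp: orbit_zero)

definition full_rank :: "nat \<Rightarrow> (int \<times> int) list \<Rightarrow> bool"
  where "full_rank p xs \<longleftrightarrow> (\<exists>u\<in>set xs. \<exists>w\<in>set xs. det2 u w mod int p \<noteq> 0)"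

lemma full_rank_act: "g \<in> SL2Z \<Longrightarrow> full_rank p (act p g xs) = full_rank p xs"
  by (auto simp: full_rank_def act_eq_map det2_act_vec SL2Z_iff_det)

lemma full_rank_orbit: "ys \<in> orbit p xs \<Longrightarrow> full_rank p ys = full_rank p xs"
  by (auto simp: orbit_iff full_rank_act)

definition low_rank_configs :: "nat \<Rightarrow> nat \<Rightarrow> (int \<times> int) list set"
  where "low_rank_configs q n = {xs \<in> configs q n. \<not> full_rank q xs}"

definition low_rank_extensions :: "nat \<Rightarrow> (int \<times> int) list \<Rightarrow> (int \<times> int) set"
  where "low_rank_extensions q xs = {x \<in> vecs q. \<forall>u\<in>set xs. det2 u x mod int q = 0}"

lemma full_rank_Cons:
  "full_rank q (x # xs) \<longleftrightarrow> full_rank q xs \<or> (\<exists>u\<in>set xs. det2 u x mod int q \<noteq> 0)"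
proof -
  have "det2 x u mod int q = 0 \<longleftrightarrow> det2 u x mod int q = 0" for u
    using dvd_minus_iff[of "int q" "det2 u x"] by (simp add: det2_def dvd_eq_mod_eq_0 algebra_simps)
  moreover have "det2 x x = 0"
    by (simp add: det2_def)
  ultimately show ?thesis
    unfolding full_rank_def by auto
qed

lemma low_rank_configs_Suc:
  "low_rank_configs q (Suc n) = (\<lambda>(xs, x). x # xs) ` (SIGMA xs:low_rank_configs q n. low_rank_extensions q xs)"
  by (auto simp: low_rank_configs_def low_rank_extensions_def configs_eq full_rank_Cons length_Suc_conv)

lemma finite_low_rank_configs: "finite (low_rank_configs q n)"
  using finite_configs by (simp add: low_rank_configs_def)

lemma zero_in_low_rank_configs: "q > 0 \<Longrightarrow> replicate n (0, 0) \<in> low_rank_configs q n"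
  by (auto simp: low_rank_configs_def configs_eq full_rank_def det2_def vecs_def)

lemma low_rank_extensions_zero: "low_rank_extensions q (replicate n (0, 0)) = vecs q"
  by (auto simp: low_rank_extensions_def det2_def)

lemma orbit_subset_low_rank_configs:
  assumes "p > 0" "xs \<in> low_rank_configs p n"
  shows "orbit p xs \<subseteq> low_rank_configs p n"
proof
  fix ys
  assume "ys \<in> orbit p xs"
  then show "ys \<in> low_rank_configs p n"
    using assms orbit_subset_configs[OF assms(1), of xs n] full_rank_orbit[of ys p xs]
    by (auto simp: low_rank_configs_def)
qed

lemma orbit_subset_full_rank_configs:
  assumes "p > 0" "xs \<in> configs p n - low_rank_configs p n"
  shows "orbit p xs \<subseteq> configs p n - low_rank_configs p n"
proof
  fix ys
  assume "ys \<in> orbit p xs"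
  then show "ys \<in> configs p n - low_rank_configs p n"
    using assms orbit_subset_configs[OF assms(1), of xs n] full_rank_orbit[of ys p xs]
    by (auto simp: low_rank_configs_def)
qed

lemma r_eq_orbit_counts:
  assumes "p > 0"
  shows "r p n = 1 + card (orbit p ` (low_rank_configs p n - {replicate n (0, 0)}))
                   + card (orbit p ` (configs p n - low_rank_configs p n))"
proof -
  let ?C = "configs p n" and ?L = "low_rank_configs p n" and ?z = "replicate n (0, 0)"
  have L_C: "?L \<subseteq> ?C"
    by (auto simp: low_rank_configs_def)
  have "r p n = card (orbit p ` ?C)"
    by (simp add: r_def Setcompr_eq_image)
  also have "\<dots> = card (orbit p ` ?L) + card (orbit p ` (?C - ?L))"
    using finite_configs L_C self_in_orbit orbit_subset_low_rank_configs[OF assms]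
    by (rule card_image_split_invariant)
  also have "card (orbit p ` ?L) = card (orbit p ` {?z}) + card (orbit p ` (?L - {?z}))"
    using finite_low_rank_configs zero_in_low_rank_configs[OF assms] self_in_orbit L_C orbit_zero
    by (intro card_image_split_invariant) auto
  finally show ?thesis
    by simp
qed

context
  fixes p :: nat
  assumes prime_p: "prime p"
begin

lemma p_gt_1: "int p > 1"
  using prime_gt_1_nat[OF prime_p] by simp

lemma prime_dvd_mult_p: "int p dvd x * y \<Longrightarrow> int p dvd x \<or> int p dvd y"
  using prime_p by (simp add: prime_dvd_mult_iff)

lemma inverse_mod:
  assumes "\<not> int p dvd a"
  shows "\<exists>a'. int p dvd (a * a' - 1)"
proof -
  have "coprime a (int p)"
    using assms prime_p by (metis prime_imp_coprime coprime_commute prime_nat_int_transfer)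
  then obtain a' where "[a * a' = 1] (mod int p)"
    using cong_solve_coprime_int by blast
  then show ?thesis
    by (auto simp: cong_iff_dvd_diff)
qed

lemma det2_zero_imp_multiple:
  assumes "(v1, v2) \<in> vecs p" "(v1, v2) \<noteq> (0, 0)" "int p dvd det2 (v1, v2) (u1, u2)"
  shows "\<exists>s. int p dvd (u1 - s * v1) \<and> int p dvd (u2 - s * v2)"
proof (cases "int p dvd v1")
  case False
  obtain v1' where v1': "int p dvd (v1 * v1' - 1)"
    using inverse_mod False by blast
  have "u1 - (u1 * v1') * v1 = - u1 * (v1 * v1' - 1)"
       "u2 - (u1 * v1') * v2 = - u2 * (v1 * v1' - 1) + v1' * det2 (v1, v2) (u1, u2)"
    by (simp_all add: det2_def algebra_simps)
  then show ?thesis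
    using v1' assms(3) by (intro exI[of _ "u1 * v1'"]) simp
next
  case True
  then have "\<not> int p dvd v2"
    using nonzero_vec_coord assms by blast
  then obtain v2' where v2': "int p dvd (v2 * v2' - 1)"
    using inverse_mod by blast
  have "u2 - (u2 * v2') * v2 = - u2 * (v2 * v2' - 1)"
       "u1 - (u2 * v2') * v1 = - u1 * (v2 * v2' - 1) - v2' * det2 (v1, v2) (u1, u2)"
    by (simp_all add: det2_def algebra_simps)
  then show ?thesis
    using v2' assms(3) by (intro exI[of _ "u2 * v2'"]) simp
qed

lemma det2_solvable:
  assumes "(v1, v2) \<in> vecs p" "(v1, v2) \<noteq> (0, 0)"
  shows "\<exists>x y. int p dvd (det2 (v1, v2) (x, y) - \<delta>)"
proof (cases "int p dvd v1")
  case False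
  obtain v1' where v1': "int p dvd (v1 * v1' - 1)"
    using inverse_mod False by blast
  have "det2 (v1, v2) (0, \<delta> * v1') - \<delta> = \<delta> * (v1 * v1' - 1)"
    by (simp add: det2_def algebra_simps)
  then show ?thesis
    using v1' by (metis dvd_mult)
next
  case True
  then have "\<not> int p dvd v2"
    using nonzero_vec_coord assms by blast
  then obtain v2' where v2': "int p dvd (v2 * v2' - 1)"
    using inverse_mod by blast
  have "det2 (v1, v2) (- (\<delta> * v2'), 0) - \<delta> = \<delta> * (v2 * v2' - 1)"
    by (simp add: det2_def algebra_simps)
  then show ?thesis
    using v2' by (metis dvd_mult)
qed

lemma det2_nonzero_imp_independent:
  assumes "int p dvd (\<alpha> * u1 + \<beta> * u2)" "int p dvd (\<alpha> * w1 + \<beta> * w2)"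
    and "\<not> int p dvd det2 (u1, u2) (w1, w2)"
  shows "int p dvd \<alpha> \<and> int p dvd \<beta>"
proof -
  have "\<alpha> * det2 (u1, u2) (w1, w2) = w2 * (\<alpha> * u1 + \<beta> * u2) - u2 * (\<alpha> * w1 + \<beta> * w2)"
       "\<beta> * det2 (u1, u2) (w1, w2) = u1 * (\<alpha> * w1 + \<beta> * w2) - w1 * (\<alpha> * u1 + \<beta> * u2)"
    by (simp_all add: det2_def algebra_simps)
  then have "int p dvd \<alpha> * det2 (u1, u2) (w1, w2)" "int p dvd \<beta> * det2 (u1, u2) (w1, w2)"
    using assms(1,2) by simp_all
  then show ?thesis
    using prime_dvd_mult_p assms(3) by blast
qed

lemma SL2Z_lift_lower_left_nondvd:
  assumes "\<not> int p dvd c" "int p dvd (mat_det (a, b, c, d) - 1)"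
  shows "\<exists>g\<in>SL2Z. mat_mod p g = mat_mod p (a, b, c, d)"
proof -
  obtain c' where c': "int p dvd (c * c' - 1)"
    using inverse_mod assms(1) by blast
  define x where "x = (a - 1) * c'"
  define y where "y = (d - 1) * c'"
  \<comment> \<open>the product of the elementary matrices (1 x; 0 1), (1 0; c 1) and (1 y; 0 1)\<close>
  have SL: "(1 + x * c, (1 + x * c) * y + x, c, c * y + 1) \<in> SL2Z"
    by (simp add: SL2Z_iff_det mat_det_def algebra_simps)
  have "1 + x * c - a = (a - 1) * (c * c' - 1)"
       "c * y + 1 - d = (d - 1) * (c * c' - 1)"
       "(1 + x * c) * y + x - b
          = c' * (mat_det (a, b, c, d) - 1) + (a - 1) * (d - 1) * c' * (c * c' - 1) + b * (c * c' - 1)"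
    unfolding x_def y_def mat_det_def by (simp_all add: algebra_simps)
  then have "int p dvd (1 + x * c - a)" "int p dvd (c * y + 1 - d)" "int p dvd ((1 + x * c) * y + x - b)"
    using c' assms(2) by simp_all
  then show ?thesis
    by (intro bexI[OF _ SL]) (simp add: mat_mod_def mod_eq_dvd_iff)
qed

lemma SL2Z_lift:
  assumes "int p dvd (mat_det h - 1)"
  shows "\<exists>g\<in>SL2Z. mat_mod p g = mat_mod p h"
proof -
  obtain a b c d where h: "h = (a, b, c, d)"
    by (cases h) auto
  show ?thesis
  proof (cases "int p dvd c")
    case False
    then show ?thesis
      using SL2Z_lift_lower_left_nondvd assms h by blast
  next
    case True
    \<comment> \<open>add the first row to the second, lift, and subtract it again\<close>
    have "\<not> int p dvd a"
    proof
      assume "int p dvd a"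
      with True have "int p dvd mat_det h"
        by (simp add: h mat_det_def)
      then have "int p dvd (mat_det h - (mat_det h - 1))"
        using assms by (rule dvd_diff)
      then have "int p dvd 1"
        by simp
      with p_gt_1 show False
        by (simp add: zdvd1_eq)
    qed
    with True have "\<not> int p dvd (a + c)"
      using dvd_add_left_iff by blast
    moreover have "int p dvd (mat_det (a, b, a + c, b + d) - 1)"
      using assms by (simp add: h mat_det_def algebra_simps)
    ultimately obtain a1 b1 c1 d1 where
      g': "(a1, b1, c1, d1) \<in> SL2Z" "mat_mod p (a1, b1, c1, d1) = mat_mod p (a, b, a + c, b + d)"
      using SL2Z_lift_lower_left_nondvd by (metis prod_cases4)
    then have "(a1, b1, c1 - a1, d1 - b1) \<in> SL2Z"
      by (simp add: SL2Z_iff_det mat_det_def algebra_simps)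
    moreover have "mat_mod p (a1, b1, c1 - a1, d1 - b1) = mat_mod p h"
    proof -
      have "a1 mod int p = a mod int p" "b1 mod int p = b mod int p"
           "c1 mod int p = (a + c) mod int p" "d1 mod int p = (b + d) mod int p"
        using g'(2) by (simp_all add: mat_mod_def)
      then have "(c1 - a1) mod int p = c mod int p" "(d1 - b1) mod int p = d mod int p"
        by (metis mod_diff_eq add_diff_cancel_left')+
      with \<open>a1 mod int p = a mod int p\<close> \<open>b1 mod int p = b mod int p\<close> show ?thesis
        by (simp add: h mat_mod_def)
    qed
    ultimately show ?thesis
      by blast
  qed
qed

definition SL2_mod :: "nat \<Rightarrow> (int \<times> int \<times> int \<times> int) set"
  where "SL2_mod q = {g. mat_mod q g = g \<and> mat_det g mod int q = 1}"

lemma mat_mod_in_SL2_mod: "g \<in> SL2Z \<Longrightarrow> mat_mod p g \<in> SL2_mod p"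
  using p_gt_1 by (cases g) (simp add: SL2_mod_def mat_mod_def mat_det_def SL2Z_iff_det det_mod)

lemma SL2_mod_lift:
  assumes "h \<in> SL2_mod p"
  shows "\<exists>g\<in>SL2Z. mat_mod p g = h"
proof -
  have "mat_det h mod int p = 1 mod int p"
    using assms p_gt_1 by (simp add: SL2_mod_def)
  then have "int p dvd (mat_det h - 1)"
    by (simp add: mod_eq_dvd_iff)
  moreover have "mat_mod p h = h"
    using assms by (simp add: SL2_mod_def)
  ultimately show ?thesis
    using SL2Z_lift by metis
qed

lemma orbit_eq_image_SL2_mod: "orbit p xs = (\<lambda>h. act p h xs) ` SL2_mod p"
proof
  show "orbit p xs \<subseteq> (\<lambda>h. act p h xs) ` SL2_mod p"
    using mat_mod_in_SL2_mod by (auto simp: orbit_iff) (metis act_mat_mod image_eqI)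
  show "(\<lambda>h. act p h xs) ` SL2_mod p \<subseteq> orbit p xs"
    using SL2_mod_lift by (auto simp: orbit_iff) (metis act_mat_mod)
qed

lemma SL2_mod_entries:
  assumes "(a, b, c, d) \<in> SL2_mod p"
  shows "a \<in> {0..<int p} \<and> b \<in> {0..<int p} \<and> c \<in> {0..<int p} \<and> d \<in> {0..<int p}"
proof -
  have "a mod int p = a" "b mod int p = b" "c mod int p = c" "d mod int p = d"
    using assms by (auto simp: SL2_mod_def mat_mod_def)
  moreover have "x mod int p \<in> {0..<int p}" for x
    using p_gt_1 by simp
  ultimately show ?thesis
    by metis
qed

lemma card_det2_eq:
  assumes v: "(v1, v2) \<in> vecs p" "(v1, v2) \<noteq> (0, 0)" and \<delta>: "\<delta> \<in> {0..<int p}"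
  shows "card {u \<in> vecs p. det2 (v1, v2) u mod int p = \<delta>} = p"
proof -
  \<comment> \<open>the solutions form the line through a particular solution (x0, y0) in direction (v1, v2)\<close>
  obtain x0 y0 where sol: "int p dvd (det2 (v1, v2) (x0, y0) - \<delta>)"
    using det2_solvable[OF v] by blast
  define f where "f s = ((x0 + s * v1) mod int p, (y0 + s * v2) mod int p)" for s
  have \<delta>_mod: "\<delta> mod int p = \<delta>"
    using \<delta> by simp
  have "{u \<in> vecs p. det2 (v1, v2) u mod int p = \<delta>} = f ` {0..<int p}"
  proof (intro equalityI subsetI)
    fix u
    assume u: "u \<in> {u \<in> vecs p. det2 (v1, v2) u mod int p = \<delta>}"
    obtain u1 u2 where uu: "u = (u1, u2)"
      by (cases u) auto
    have "int p dvd (det2 (v1, v2) (u1, u2) - \<delta>)"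
      using u uu \<delta>_mod by (simp add: mod_eq_dvd_iff[symmetric])
    then have "int p dvd ((det2 (v1, v2) (u1, u2) - \<delta>) - (det2 (v1, v2) (x0, y0) - \<delta>))"
      using sol by (rule dvd_diff)
    then have "int p dvd det2 (v1, v2) (u1 - x0, u2 - y0)"
      by (simp add: det2_def algebra_simps)
    then obtain s where s: "int p dvd (u1 - x0 - s * v1)" "int p dvd (u2 - y0 - s * v2)"
      using det2_zero_imp_multiple[OF v] by blast
    have "(x0 + (s mod int p) * v1) mod int p = (x0 + s * v1) mod int p"
         "(y0 + (s mod int p) * v2) mod int p = (y0 + s * v2) mod int p"
      by (metis mod_add_right_eq mod_mult_left_eq)+
    moreover have "(x0 + s * v1) mod int p = u1 mod int p" "(y0 + s * v2) mod int p = u2 mod int p"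
      using s by (simp_all add: mod_eq_dvd_iff) (metis dvd_diff_commute diff_diff_eq)+
    moreover have "u1 mod int p = u1" "u2 mod int p = u2"
      using u uu by (auto simp: vecs_def)
    moreover have "s mod int p \<in> {0..<int p}"
      using p_gt_1 by simp
    ultimately show "u \<in> f ` {0..<int p}"
      using uu by (auto simp: f_def intro!: image_eqI[of _ _ "s mod int p"])
  next
    fix u
    assume "u \<in> f ` {0..<int p}"
    then obtain s where u: "u = f s"
      by auto
    have "u \<in> vecs p"
      using u p_gt_1 by (simp add: f_def vecs_def)
    moreover have "det2 (v1, v2) u mod int p = (v1 * (y0 + s * v2) - v2 * (x0 + s * v1)) mod int p"
      by (simp add: u f_def det2_def lindiff_mod_right)
    moreover have "\<dots> = det2 (v1, v2) (x0, y0) mod int p"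
      by (simp add: det2_def algebra_simps)
    moreover have "\<dots> = \<delta>"
      using sol \<delta>_mod by (metis mod_eq_dvd_iff)
    ultimately show "u \<in> {u \<in> vecs p. det2 (v1, v2) u mod int p = \<delta>}"
      by simp
  qed
  moreover have "inj_on f {0..<int p}"
  proof
    fix s t
    assume st: "s \<in> {0..<int p}" "t \<in> {0..<int p}" "f s = f t"
    then have "int p dvd ((s - t) * v1)" "int p dvd ((s - t) * v2)"
      by (simp_all add: f_def mod_eq_dvd_iff algebra_simps)
    then have "int p dvd (s - t)"
      using nonzero_vec_coord[OF v] prime_dvd_mult_p by blast
    then show "s = t"
      using residue_eq st by blast
  qed
  ultimately show ?thesis
    by (simp add: card_image)
qed

lemma card_SL2_mod: "card (SL2_mod p) = p ^ 3 - p"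
proof -
  define S where "S = (SIGMA v:vecs p - {(0, 0)}. {u \<in> vecs p. det2 v u mod int p = 1})"
  define f :: "(int \<times> int) \<times> int \<times> int \<Rightarrow> int \<times> int \<times> int \<times> int"
    where "f = (\<lambda>(v, u). (fst v, fst u, snd v, snd u))"
  have "SL2_mod p = f ` S"
  proof (intro equalityI subsetI)
    fix g
    assume g: "g \<in> SL2_mod p"
    obtain a b c d where abcd: "g = (a, b, c, d)"
      by (cases g) auto
    have "(a * d - b * c) mod int p = 1"
      using g abcd by (simp add: SL2_mod_def mat_det_def)
    then have "((a, c), (b, d)) \<in> S"
      using SL2_mod_entries[of a b c d] g abcd by (auto simp: S_def vecs_def det2_def algebra_simps)
    then show "g \<in> f ` S"
      using abcd by (force simp: f_def)
  next
    fix g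
    assume "g \<in> f ` S"
    then show "g \<in> SL2_mod p"
      by (auto simp: f_def S_def SL2_mod_def mat_mod_def mat_det_def det2_def vecs_def algebra_simps)
  qed
  moreover have "inj_on f S"
    by (auto simp: f_def inj_on_def)
  moreover have "card S = (p\<^sup>2 - 1) * p"
  proof -
    have "card S = (\<Sum>v\<in>vecs p - {(0, 0)}. card {u \<in> vecs p. det2 v u mod int p = 1})"
      unfolding S_def using finite_vecs by (intro card_SigmaI) auto
    also have "\<dots> = (\<Sum>v\<in>vecs p - {(0, 0)}. p)"
    proof (intro sum.cong refl)
      fix v
      assume "v \<in> vecs p - {(0, 0)}"
      then show "card {u \<in> vecs p. det2 v u mod int p = 1} = p"
        using card_det2_eq[of "fst v" "snd v" 1] p_gt_1 by (cases v) auto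
    qed
    also have "\<dots> = (p\<^sup>2 - 1) * p"
      using p_gt_1 by (simp add: card_vecs vecs_def card_Diff_singleton power2_eq_square)
    finally show ?thesis .
  qed
  ultimately have "card (SL2_mod p) = (p\<^sup>2 - 1) * p"
    by (simp add: card_image)
  then show ?thesis
    by (simp add: power2_eq_square power3_eq_cube diff_mult_distrib)
qed

lemma SL2Z_maps_e1:
  assumes "v \<in> vecs p" "v \<noteq> (0, 0)"
  shows "\<exists>g\<in>SL2Z. act_vec p g (1, 0) = v"
proof -
  obtain v1 v2 where v: "v = (v1, v2)"
    by (cases v) auto
  obtain b d where "int p dvd (det2 (v1, v2) (b, d) - 1)"
    using det2_solvable assms v by blast
  then have "int p dvd (mat_det (v1, b, v2, d) - 1)"
    by (simp add: det2_def mat_det_def algebra_simps)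
  then obtain g where g: "g \<in> SL2Z" "mat_mod p g = mat_mod p (v1, b, v2, d)"
    using SL2Z_lift by blast
  then have "act_vec p g (1, 0) = act_vec p (v1, b, v2, d) (1, 0)"
    by (metis act_vec_mat_mod)
  also have "\<dots> = v"
    using assms v by (simp add: act_vec_def vecs_def)
  finally show ?thesis
    using g(1) by blast
qed

lemma SL2Z_transitive:
  assumes "v \<in> vecs p - {(0, 0)}" "w \<in> vecs p - {(0, 0)}"
  shows "\<exists>g\<in>SL2Z. act_vec p g v = w"
proof -
  obtain gv gw where gv: "gv \<in> SL2Z" "act_vec p gv (1, 0) = v"
    and gw: "gw \<in> SL2Z" "act_vec p gw (1, 0) = w"
    using SL2Z_maps_e1 assms by (metis Diff_iff singletonI)
  have "act_vec p (mat_adj gv) v = act_vec p (mat_mult (mat_adj gv) gv) (1, 0)"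
    using gv(2) by (simp add: act_vec_mat_mult)
  also have "\<dots> = (1, 0)"
    using gv(1) p_gt_1 by (simp add: mat_mult_adj_left SL2Z_iff_det act_vec_def)
  finally have "act_vec p (mat_mult gw (mat_adj gv)) v = w"
    using gw(2) by (simp add: act_vec_mat_mult)
  moreover have "mat_mult gw (mat_adj gv) \<in> SL2Z"
    using gv(1) gw(1) by (simp add: SL2Z_iff_det mat_det_mult mat_det_adj)
  ultimately show ?thesis
    by blast
qed

lemma card_orbit_full_rank:
  assumes "full_rank p xs"
  shows "card (orbit p xs) = p ^ 3 - p"
proof -
  obtain u1 u2 w1 w2 where uw: "(u1, u2) \<in> set xs" "(w1, w2) \<in> set xs"
    and indep: "\<not> int p dvd det2 (u1, u2) (w1, w2)"
    using assms by (auto simp: full_rank_def dvd_eq_mod_eq_0)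
  have "inj_on (\<lambda>h. act p h xs) (SL2_mod p)"
  proof
    fix g h
    assume g: "g \<in> SL2_mod p" and h: "h \<in> SL2_mod p" and eq: "act p g xs = act p h xs"
    obtain a b c d a' b' c' d' where gh: "g = (a, b, c, d)" "h = (a', b', c', d')"
      by (metis prod_cases4)
    have lin: "int p dvd ((a - a') * x + (b - b') * y) \<and> int p dvd ((c - c') * x + (d - d') * y)"
      if "(x, y) \<in> set xs" for x y
    proof -
      have "act_vec p g (x, y) = act_vec p h (x, y)"
        using eq that by (auto simp: act_eq_map)
      then have "(a * x + b * y) mod int p = (a' * x + b' * y) mod int p"
                "(c * x + d * y) mod int p = (c' * x + d' * y) mod int p"
        by (simp_all add: gh act_vec_def)
      moreover have "(a - a') * x + (b - b') * y = (a * x + b * y) - (a' * x + b' * y)"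
                    "(c - c') * x + (d - d') * y = (c * x + d * y) - (c' * x + d' * y)"
        by (simp_all add: algebra_simps)
      ultimately show ?thesis
        by (metis mod_eq_dvd_iff)
    qed
    have "int p dvd (a - a') \<and> int p dvd (b - b')"
      using lin[OF uw(1)] lin[OF uw(2)] det2_nonzero_imp_independent[OF _ _ indep] by blast
    moreover have "int p dvd (c - c') \<and> int p dvd (d - d')"
      using lin[OF uw(1)] lin[OF uw(2)] det2_nonzero_imp_independent[OF _ _ indep] by blast
    moreover have "a \<in> {0..<int p} \<and> b \<in> {0..<int p} \<and> c \<in> {0..<int p} \<and> d \<in> {0..<int p}"
                  "a' \<in> {0..<int p} \<and> b' \<in> {0..<int p} \<and> c' \<in> {0..<int p} \<and> d' \<in> {0..<int p}"
      using SL2_mod_entries g h gh by simp_all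
    ultimately show "g = h"
      using residue_eq[of a p a'] residue_eq[of b p b'] residue_eq[of c p c'] residue_eq[of d p d'] gh
      by simp
  qed
  then show ?thesis
    by (simp add: orbit_eq_image_SL2_mod card_image card_SL2_mod)
qed

lemma card_orbit_low_rank:
  assumes xs: "xs \<in> configs p n" "\<not> full_rank p xs" "xs \<noteq> replicate n (0, 0)"
  shows "card (orbit p xs) = p\<^sup>2 - 1"
proof -
  have "length xs = n"
    using xs(1) by (simp add: configs_eq)
  then obtain v1 v2 where v: "(v1, v2) \<in> set xs" "(v1, v2) \<noteq> (0, 0)"
    using nonzero_column xs(3) by fastforce
  obtain j where j: "j < length xs" "xs ! j = (v1, v2)"
    using v by (metis in_set_conv_nth)
  have v_vecs: "(v1, v2) \<in> vecs p"
    using xs v by (auto simp: configs_eq)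
  have "bij_betw (\<lambda>ys. ys ! j) (orbit p xs) (vecs p - {(0, 0)})"
  proof (rule bij_betw_imageI)
    show "inj_on (\<lambda>ys. ys ! j) (orbit p xs)"
    proof
      fix ys zs
      assume ys: "ys \<in> orbit p xs" and zs: "zs \<in> orbit p xs" and eq: "ys ! j = zs ! j"
      obtain g h where gh: "ys = act p g xs" "zs = act p h xs"
        using ys zs unfolding orbit_iff by blast
      have eq_v: "act_vec p g (v1, v2) = act_vec p h (v1, v2)"
        using eq gh j by (simp add: act_eq_map)
      have "act_vec p g u = act_vec p h u" if "u \<in> set xs" for u
      proof -
        obtain u1 u2 where u: "u = (u1, u2)"
          by (cases u) auto
        have "int p dvd det2 (v1, v2) (u1, u2)"
          using xs(2) v(1) that u unfolding full_rank_def dvd_eq_mod_eq_0 by blast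
        then obtain s where s: "int p dvd (u1 - s * v1)" "int p dvd (u2 - s * v2)"
          using det2_zero_imp_multiple[OF v_vecs v(2)] by blast
        show ?thesis
          using act_vec_multiple[OF s, of g] act_vec_multiple[OF s, of h] eq_v u by simp
      qed
      then show "ys = zs"
        using gh by (simp add: act_eq_map)
    qed
  next
    show "(\<lambda>ys. ys ! j) ` orbit p xs = vecs p - {(0, 0)}"
    proof (intro equalityI subsetI)
      fix w
      assume "w \<in> (\<lambda>ys. ys ! j) ` orbit p xs"
      then obtain ys where ys: "ys \<in> orbit p xs" and w: "w = ys ! j"
        by blast
      then obtain g where g: "ys = act p g xs"
        by (auto simp: orbit_iff)
      obtain h where h: "xs = act p h ys"
        using orbit_sym[OF xs(1) ys(1)] by (auto simp: orbit_iff)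
      have "w = act_vec p g (v1, v2)"
        using w g j by (simp add: act_eq_map)
      moreover have "j < length ys"
        using g j by (simp add: act_eq_map)
      then have "(v1, v2) = act_vec p h w"
        using arg_cong[OF h, of "\<lambda>zs. zs ! j"] j(2) w by (simp add: act_eq_map)
      moreover have "act_vec p g (v1, v2) \<in> vecs p"
        using p_gt_1 by (simp add: act_vec_in_vecs)
      ultimately show "w \<in> vecs p - {(0, 0)}"
        using v(2) by (auto simp: act_vec_zero)
    next
      fix w
      assume "w \<in> vecs p - {(0, 0)}"
      then obtain g where "g \<in> SL2Z" "act_vec p g (v1, v2) = w"
        using SL2Z_transitive v v_vecs by blast
      then have "act p g xs \<in> orbit p xs" "act p g xs ! j = w"
        using j by (auto simp: orbit_iff act_eq_map)
      then show "w \<in> (\<lambda>ys. ys ! j) ` orbit p xs"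
        by (metis image_eqI)
    qed
  qed
  then have "card (orbit p xs) = card (vecs p - {(0, 0)})"
    by (rule bij_betw_same_card)
  also have "\<dots> = p\<^sup>2 - 1"
    using p_gt_1 by (simp add: card_vecs vecs_def card_Diff_singleton power2_eq_square)
  finally show ?thesis .
qed

lemma card_low_rank_extensions:
  assumes xs: "xs \<in> low_rank_configs p n" "xs \<noteq> replicate n (0, 0)"
  shows "card (low_rank_extensions p xs) = p"
proof -
  have "length xs = n" "set xs \<subseteq> vecs p"
    using xs(1) by (simp_all add: low_rank_configs_def configs_eq)
  then obtain v1 v2 where v: "(v1, v2) \<in> set xs" "(v1, v2) \<noteq> (0, 0)" "(v1, v2) \<in> vecs p"
    using nonzero_column xs(2) by fastforce
  \<comment> \<open>all columns are multiples of the nonzero column v, so only v imposes a condition\<close>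
  have "low_rank_extensions p xs = {x \<in> vecs p. det2 (v1, v2) x mod int p = 0}"
  proof (intro equalityI subsetI)
    fix x
    assume "x \<in> {x \<in> vecs p. det2 (v1, v2) x mod int p = 0}"
    then have x: "x \<in> vecs p" "int p dvd det2 (v1, v2) x"
      by (simp_all add: dvd_eq_mod_eq_0)
    have "int p dvd det2 u x" if u: "u \<in> set xs" for u
    proof -
      obtain u1 u2 where uu: "u = (u1, u2)"
        by (cases u) auto
      have "int p dvd det2 (v1, v2) (u1, u2)"
        using xs(1) u v(1) uu unfolding low_rank_configs_def full_rank_def dvd_eq_mod_eq_0 by blast
      then obtain s where s: "int p dvd (u1 - s * v1)" "int p dvd (u2 - s * v2)"
        using det2_zero_imp_multiple[OF v(3) v(2)] by blast
      have "det2 u x = (u1 - s * v1) * snd x - (u2 - s * v2) * fst x + s * det2 (v1, v2) x"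
        by (simp add: uu det2_def algebra_simps)
      then show ?thesis
        using s x(2) by simp
    qed
    then show "x \<in> low_rank_extensions p xs"
      using x(1) by (simp add: low_rank_extensions_def dvd_eq_mod_eq_0)
  qed (use v(1) in \<open>auto simp: low_rank_extensions_def\<close>)
  then show ?thesis
    using card_det2_eq[OF v(3) v(2), of 0] p_gt_1 by simp
qed

lemma card_low_rank_configs_Suc:
  "int (card (low_rank_configs p (Suc n))) = int p ^ 2 + int p * (int (card (low_rank_configs p n)) - 1)"
proof -
  let ?L = "low_rank_configs p n" and ?z = "replicate n (0, 0)"
  have z: "?z \<in> ?L"
    using p_gt_1 by (simp add: zero_in_low_rank_configs)
  have inj: "inj_on (\<lambda>(xs, x). x # xs) (SIGMA xs:?L. low_rank_extensions p xs)"
    by (auto simp: inj_on_def)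
  have "\<forall>xs\<in>?L. finite (low_rank_extensions p xs)"
    using finite_vecs by (simp add: low_rank_extensions_def)
  then have "card (low_rank_configs p (Suc n)) = (\<Sum>xs\<in>?L. card (low_rank_extensions p xs))"
    unfolding low_rank_configs_Suc card_image[OF inj] by (rule card_SigmaI[OF finite_low_rank_configs])
  also have "\<dots> = card (low_rank_extensions p ?z) + (\<Sum>xs\<in>?L - {?z}. card (low_rank_extensions p xs))"
    using sum.remove[OF finite_low_rank_configs z] by simp
  also have "(\<Sum>xs\<in>?L - {?z}. card (low_rank_extensions p xs)) = (\<Sum>xs\<in>?L - {?z}. p)"
    using card_low_rank_extensions by (intro sum.cong) auto
  also have "\<dots> = (card ?L - 1) * p"
    using z finite_low_rank_configs by simp
  finally show ?thesis
    using z finite_low_rank_configs card_gt_0_iff[of ?L]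
    by (auto simp: low_rank_extensions_zero card_vecs of_nat_diff algebra_simps)
qed

lemma card_low_rank_configs:
  "int (card (low_rank_configs p n)) = int p ^ (n + 1) + int p ^ n - int p"
proof (induction n)
  case 0
  have "low_rank_configs p 0 = {[]}"
    by (auto simp: low_rank_configs_def configs_eq full_rank_def)
  then show ?case
    by simp
next
  case (Suc n)
  show ?case
    unfolding card_low_rank_configs_Suc Suc.IH by (simp add: algebra_simps power2_eq_square)
qed

lemma card_orbits_low_rank:
  "(p\<^sup>2 - 1) * card (orbit p ` (low_rank_configs p n - {replicate n (0, 0)}))
     = card (low_rank_configs p n) - 1"
proof -
  let ?L = "low_rank_configs p n" and ?z = "replicate n (0, 0)"
  have p_pos: "p > 0"
    using p_gt_1 by simp
  have L_configs: "?L \<subseteq> configs p n"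
    by (auto simp: low_rank_configs_def)
  have closed: "orbit p xs \<subseteq> ?L - {?z}" if "xs \<in> ?L - {?z}" for xs
    using that L_configs orbit_subset_low_rank_configs[OF p_pos, of xs n] zero_notin_orbit[of xs p n] by auto
  have "(p\<^sup>2 - 1) * card (orbit p ` (?L - {?z})) = card (?L - {?z})"
  proof (rule card_partition_uniform)
    show "orbit p x = orbit p y" if "x \<in> ?L - {?z}" "y \<in> ?L - {?z}" "orbit p x \<inter> orbit p y \<noteq> {}" for x y
      using that L_configs orbits_disjoint by blast
  qed (use finite_low_rank_configs self_in_orbit L_configs closed card_orbit_low_rank in
    \<open>auto simp: low_rank_configs_def\<close>)
  then show ?thesis
    using zero_in_low_rank_configs[OF p_pos] finite_low_rank_configs by (simp add: card_Diff_singleton)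
qed

lemma card_orbits_full_rank:
  "(p ^ 3 - p) * card (orbit p ` (configs p n - low_rank_configs p n))
     = p ^ (2 * n) - card (low_rank_configs p n)"
proof -
  let ?C = "configs p n" and ?L = "low_rank_configs p n"
  have p_pos: "p > 0"
    using p_gt_1 by simp
  have "(p ^ 3 - p) * card (orbit p ` (?C - ?L)) = card (?C - ?L)"
  proof (rule card_partition_uniform)
    show "orbit p x = orbit p y" if "x \<in> ?C - ?L" "y \<in> ?C - ?L" "orbit p x \<inter> orbit p y \<noteq> {}" for x y
      using that orbits_disjoint by blast
  qed (use finite_configs self_in_orbit orbit_subset_full_rank_configs[OF p_pos] card_orbit_full_rank in
    \<open>auto simp: low_rank_configs_def\<close>)
  moreover have "?L \<subseteq> ?C"
    by (auto simp: low_rank_configs_def)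
  ultimately show ?thesis
    using finite_low_rank_configs by (simp add: card_Diff_subset card_configs)
qed

lemma r_mult_card_SL2_mod:
  "int (r p n) * (int p ^ 3 - int p)
     = (int p ^ 3 - int p) + int p * (int (card (low_rank_configs p n)) - 1)
       + (int p ^ (2 * n) - int (card (low_rank_configs p n)))"
proof -
  let ?N = "card (low_rank_configs p n)"
  define a where "a = card (orbit p ` (low_rank_configs p n - {replicate n (0, 0)}))"
  define b where "b = card (orbit p ` (configs p n - low_rank_configs p n))"
  have p_pos: "p > 0"
    using p_gt_1 by simp
  have "?N > 0"
    using zero_in_low_rank_configs[OF p_pos] finite_low_rank_configs card_gt_0_iff by blast
  then have "int (p\<^sup>2 - 1) = int p ^ 2 - 1" "int (?N - 1) = int ?N - 1"
    using p_pos by (simp_all add: of_nat_diff)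
  then have a: "(int p ^ 2 - 1) * int a = int ?N - 1"
    using card_orbits_low_rank[of n] unfolding a_def by (metis of_nat_mult)
  have "p \<le> p ^ 3" "?N \<le> p ^ (2 * n)"
    using p_pos card_mono[OF finite_configs, of "low_rank_configs p n"]
    by (auto simp: self_le_power card_configs low_rank_configs_def)
  then have "int (p ^ 3 - p) = int p ^ 3 - int p" "int (p ^ (2 * n) - ?N) = int p ^ (2 * n) - int ?N"
    by (simp_all add: of_nat_diff)
  then have b: "(int p ^ 3 - int p) * int b = int p ^ (2 * n) - int ?N"
    using card_orbits_full_rank[of n] unfolding b_def by (metis of_nat_mult)
  have "int (r p n) * (int p ^ 3 - int p)
      = (int p ^ 3 - int p) + int p * ((int p ^ 2 - 1) * int a) + (int p ^ 3 - int p) * int b"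
    by (simp add: r_eq_orbit_counts[OF p_pos] a_def b_def algebra_simps power2_eq_square power3_eq_cube)
  then show ?thesis
    unfolding a b .
qed
end

theorem lemma4p2:
  fixes p n :: nat
  assumes "prime p" and "n \<ge> 1"
  shows "F p n = int p ^ (n - 1) * (int p ^ n + int p - 1)"
proof -
  define P where "P = int p"
  obtain m where n: "n = Suc m"
    using assms(2) by (cases n) auto
  have "P > 1"
    using p_gt_1[OF assms(1)] by (simp add: P_def)
  then have K: "P ^ 3 - P \<noteq> 0"
    using power_strict_increasing_iff[of P 1 3] by simp
  have r: "int (r p k) * (P ^ 3 - P)
      = (P ^ 3 - P) + P * (P ^ (k + 1) + P ^ k - P - 1) + (P ^ (2 * k) - (P ^ (k + 1) + P ^ k - P))" for k
    using r_mult_card_SL2_mod[OF assms(1), of k] card_low_rank_configs[OF assms(1), of k]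
    by (simp add: P_def)
  have "F p n * (P ^ 3 - P) = int (r p (Suc n)) * (P ^ 3 - P) - int (r p n) * (P ^ 3 - P)"
    by (simp add: F_def left_diff_distrib)
  also have "\<dots> = P ^ (n - 1) * (P ^ n + P - 1) * (P ^ 3 - P)"
  proof -
    define Q where "Q = P ^ m"
    have pw: "P ^ (n - 1) = Q" "P ^ n = P * Q" "P ^ (n + 1) = P * P * Q" "P ^ (Suc n) = P * P * Q"
      "P ^ (Suc n + 1) = P * P * P * Q" "P ^ (2 * n) = P * P * Q * Q" "P ^ (2 * Suc n) = P * P * P * P * Q * Q"
      by (simp_all add: n Q_def power_add mult_ac power_mult power2_eq_square)
    show ?thesis
      unfolding r pw by (simp add: algebra_simps power3_eq_cube)
  qed
  finally show ?thesis
    using K by (simp add: P_def)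
qed

end
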